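(* Let $N$ be a non-negative integer, $R$ a ring, $I$ an invertible ideal of $R$, and $\pi\in R$ with $(R/I)[\pi^\infty]=(R/I)[\pi^N]$. Let $M$ be an $R$-module which is $(\pi R+I)$-adically complete and separated and such that $M/(\pi R+I)^nM$ is a flat $R/(\pi R+I)^n$-module for every $n\ge1$. Then: (1) $(M/IM)[\pi^\infty]=(M/IM)[\pi^N]$; (2) $M/I^nM$ is $\pi$-adically complete and separated for every $n\ge1$; (3) the map $I^n\otimes_RM\to M$ is injective for every $n\ge1$.
   Context: For a module $X$ and element $\pi$, $X[\pi^k]$ denotes the elements killed by $\pi^k$ and $X[\pi^\infty]=\bigcup_kX[\pi^k]$. *)

theory Defs
  imports Complex_Main
begin

text \<open>Commutative ring R = the type 'r; R-module M = the type 'm with scalar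
  multiplication scale (locale module from HOL.Modules).  Ideals are subsets of 'r.\<close>

definition is_ideal :: "'r::comm_ring_1 set \<Rightarrow> bool" where
  "is_ideal I \<longleftrightarrow> 0 \<in> I \<and> (\<forall>a\<in>I. \<forall>b\<in>I. a + b \<in> I) \<and> (\<forall>r. \<forall>a\<in>I. r * a \<in> I)"

definition ideal_gen :: "'r::comm_ring_1 set \<Rightarrow> 'r set" where
  "ideal_gen S = {(\<Sum>i<k. r i * s i) | (k::nat) r s. \<forall>i<k. s i \<in> S}"

definition ideal_prod :: "'r::comm_ring_1 set \<Rightarrow> 'r set \<Rightarrow> 'r set" where
  "ideal_prod I J = ideal_gen {a * b | a b. a \<in> I \<and> b \<in> J}"

fun ideal_pow :: "'r::comm_ring_1 set \<Rightarrow> nat \<Rightarrow> 'r set" where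
  "ideal_pow I 0 = UNIV"
| "ideal_pow I (Suc n) = ideal_prod I (ideal_pow I n)"

definition principal_ideal :: "'r::comm_ring_1 \<Rightarrow> 'r set" where
  "principal_ideal a = {a * r | r. True}"

definition ideal_sum :: "'r::comm_ring_1 set \<Rightarrow> 'r set \<Rightarrow> 'r set" where
  "ideal_sum I J = {a + b | a b. a \<in> I \<and> b \<in> J}"

definition nonzerodivisor :: "'r::comm_ring_1 \<Rightarrow> bool" where
  "nonzerodivisor d \<longleftrightarrow> (\<forall>x. d * x = 0 \<longrightarrow> x = 0)"

text \<open>I is invertible: there is a fractional ideal J (written with a common
  denominator d, i.e. J = d^-1 J' for an ideal J' and a nonzerodivisor d) with IJ = R,
  i.e. I J' = dR.\<close>
definition invertible_ideal :: "'r::comm_ring_1 set \<Rightarrow> bool" where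
  "invertible_ideal I \<longleftrightarrow> (\<exists>J d. is_ideal J \<and> nonzerodivisor d \<and> ideal_prod I J = principal_ideal d)"

definition submod :: "('r::comm_ring_1 \<Rightarrow> 'm::ab_group_add \<Rightarrow> 'm) \<Rightarrow> 'r set \<Rightarrow> 'm set" where
  "submod scale A = {(\<Sum>i<k. scale (a i) (m i)) | (k::nat) a m. \<forall>i<k. a i \<in> A}"

text \<open>Q k = J^k M + N, the preimage in M of J^k (M/N).\<close>
definition adic_nbhd :: "('r::comm_ring_1 \<Rightarrow> 'm::ab_group_add \<Rightarrow> 'm) \<Rightarrow> 'm set \<Rightarrow> 'r set \<Rightarrow> nat \<Rightarrow> 'm set" where
  "adic_nbhd scale N J k = {y + z | y z. y \<in> submod scale (ideal_pow J k) \<and> z \<in> N}"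

text \<open>M/N is J-adically complete and separated: the map M/N \<rightarrow> lim_k (M/N)/J^k(M/N)
  is injective (separated) and surjective (complete).\<close>
definition adic_complete_sep :: "('r::comm_ring_1 \<Rightarrow> 'm::ab_group_add \<Rightarrow> 'm) \<Rightarrow> 'm set \<Rightarrow> 'r set \<Rightarrow> bool" where
  "adic_complete_sep scale N J \<longleftrightarrow>
     (\<forall>x. (\<forall>k. x \<in> adic_nbhd scale N J k) \<longrightarrow> x \<in> N) \<and>
     (\<forall>f::nat \<Rightarrow> 'm. (\<forall>k. f (Suc k) - f k \<in> adic_nbhd scale N J k) \<longrightarrow>
        (\<exists>x. \<forall>k. x - f k \<in> adic_nbhd scale N J k))"

text \<open>M/AM is a flat R/A-module, via the equational criterion of flatness
  (lifted from the quotients to R and M).\<close>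
definition quot_flat :: "('r::comm_ring_1 \<Rightarrow> 'm::ab_group_add \<Rightarrow> 'm) \<Rightarrow> 'r set \<Rightarrow> bool" where
  "quot_flat scale A \<longleftrightarrow>
     (\<forall>(k::nat) (a::nat \<Rightarrow> 'r) (x::nat \<Rightarrow> 'm). (\<Sum>i<k. scale (a i) (x i)) \<in> submod scale A \<longrightarrow>
        (\<exists>(l::nat) (b::nat \<Rightarrow> nat \<Rightarrow> 'r) (y::nat \<Rightarrow> 'm).
           (\<forall>i<k. x i - (\<Sum>j<l. scale (b i j) (y j)) \<in> submod scale A) \<and>
           (\<forall>j<l. (\<Sum>i<k. a i * b i j) \<in> A)))"

text \<open>Tensor product A \<otimes>_R M (A an ideal) = free abelian group on A \<times> M modulo the
  subgroup generated by the bilinearity / balancing relations.\<close>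
definition delta :: "'a \<Rightarrow> 'a \<Rightarrow> int" where
  "delta p = (\<lambda>q. if q = p then 1 else 0)"

definition tensor_rels :: "('r::comm_ring_1 \<Rightarrow> 'm::ab_group_add \<Rightarrow> 'm) \<Rightarrow> 'r set \<Rightarrow> ('r \<times> 'm \<Rightarrow> int) set" where
  "tensor_rels scale A =
     {(\<lambda>q. delta (a + a', m) q - delta (a, m) q - delta (a', m) q) | a a' m. a \<in> A \<and> a' \<in> A}
   \<union> {(\<lambda>q. delta (a, m + m') q - delta (a, m) q - delta (a, m') q) | a m m'. a \<in> A}
   \<union> {(\<lambda>q. delta (r * a, m) q - delta (a, scale r m) q) | r a m. a \<in> A}"

inductive_set zspan :: "('a \<Rightarrow> int) set \<Rightarrow> ('a \<Rightarrow> int) set" for G where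
  zero: "(\<lambda>q. 0) \<in> zspan G"
| add: "x \<in> zspan G \<Longrightarrow> g \<in> G \<Longrightarrow> (\<lambda>q. x q + g q) \<in> zspan G"
| sub: "x \<in> zspan G \<Longrightarrow> g \<in> G \<Longrightarrow> (\<lambda>q. x q - g q) \<in> zspan G"

text \<open>The multiplication map A \<otimes>_R M \<rightarrow> M, a \<otimes> m \<mapsto> a m, is injective: every element
  \<Sum> c_i (a_i \<otimes> m_i) of the tensor product mapping to 0 is 0 in the tensor product.\<close>
definition tensor_mult_injective :: "('r::comm_ring_1 \<Rightarrow> 'm::ab_group_add \<Rightarrow> 'm) \<Rightarrow> 'r set \<Rightarrow> bool" where
  "tensor_mult_injective scale A \<longleftrightarrow>
     (\<forall>(k::nat) (c::nat \<Rightarrow> int) (a::nat \<Rightarrow> 'r) (m::nat \<Rightarrow> 'm).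
        (\<forall>i<k. a i \<in> A) \<longrightarrow> (\<Sum>i<k. scale (of_int (c i) * a i) (m i)) = 0 \<longrightarrow>
        (\<lambda>q. \<Sum>i<k. c i * delta (a i, m i) q) \<in> zspan (tensor_rels scale A))"

end

(*
  Write K = pi R + I.  Since I is invertible, every power L = I^n has a finite dual basis
  (a i, phi i), and the bound on the pi-power torsion of R/I yields the Artin-Rees estimate
  I^n Int K^(m + n(N+1)) <= I^n K^m, i.e. the coordinate functions phi i are K-adically
  continuous.  Flatness of the quotients M/K^k M lets the coordinates act on relations in M
  modulo K^k M.  Together with K-adic completeness and separatedness of M this shows, first,
  that LM is K-adically closed, whence M/LM is pi-adically separated (completeness is
  inherited from M); second, that an element Sum a i (x) v i of L (x) M whose coefficients
  satisfy v j = Sum phi j (a i) v i, which every element of L (x) M can be brought to, maps to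
  0 in M only if all v i = 0, whence L (x) M -> M is injective.  Finally, a relation
  pi^k x in IM lifts along flatness modulo K^(m+k+1) to pi^N x in pi^m M + IM for every m,
  so pi^N x in IM by separatedness of M/IM.
*)

theory Submission
  imports Defs "HOL-Library.Function_Algebras"
begin

lemma sum_lessThan_add: "(\<Sum>i<m+n. f i) = (\<Sum>i<m. f i) + (\<Sum>i<n. f (m+i))"
  for f :: "nat \<Rightarrow> 'a::comm_monoid_add"
  by (induction n) (simp_all add: add.assoc)

lemma ideal_zero: "is_ideal I \<Longrightarrow> 0 \<in> I"
  and ideal_add: "is_ideal I \<Longrightarrow> a \<in> I \<Longrightarrow> b \<in> I \<Longrightarrow> a + b \<in> I"
  and ideal_mult_left: "is_ideal I \<Longrightarrow> a \<in> I \<Longrightarrow> r * a \<in> I"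
  by (simp_all add: is_ideal_def)

lemma ideal_mult_right: "is_ideal I \<Longrightarrow> a \<in> I \<Longrightarrow> a * r \<in> I"
  by (metis ideal_mult_left mult.commute)

lemma ideal_diff: "is_ideal I \<Longrightarrow> a \<in> I \<Longrightarrow> b \<in> I \<Longrightarrow> a - b \<in> I"
  by (metis ideal_add ideal_mult_left mult_minus1 diff_conv_add_uminus)

lemma sum_mem_ideal: "is_ideal I \<Longrightarrow> (\<And>x. x \<in> B \<Longrightarrow> f x \<in> I) \<Longrightarrow> sum f B \<in> I"
  by (induction B rule: infinite_finite_induct) (simp_all add: ideal_zero ideal_add)

lemma is_ideal_UNIV [simp]: "is_ideal UNIV"
  by (simp add: is_ideal_def)

lemma ideal_genI: "x = (\<Sum>i<k. r i * s i) \<Longrightarrow> \<forall>i<(k::nat). s i \<in> S \<Longrightarrow> x \<in> ideal_gen S"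
  unfolding ideal_gen_def by blast

lemma ideal_genE:
  "x \<in> ideal_gen S \<Longrightarrow> (\<And>k r s. x = (\<Sum>i<k. r i * s i) \<Longrightarrow> \<forall>i<(k::nat). s i \<in> S \<Longrightarrow> P) \<Longrightarrow> P"
  unfolding ideal_gen_def by blast

lemma is_ideal_ideal_gen: "is_ideal (ideal_gen S)"
  unfolding is_ideal_def
proof (intro conjI ballI allI)
  show "0 \<in> ideal_gen S"
    by (rule ideal_genI[where k=0]) auto
next
  fix a b assume "a \<in> ideal_gen S" "b \<in> ideal_gen S"
  obtain k1 :: nat and r1 s1 where a: "a = (\<Sum>i<k1. r1 i * s1 i)" "\<forall>i<k1. s1 i \<in> S"
    using \<open>a \<in> ideal_gen S\<close> by (rule ideal_genE)
  obtain k2 :: nat and r2 s2 where b: "b = (\<Sum>i<k2. r2 i * s2 i)" "\<forall>i<k2. s2 i \<in> S"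
    using \<open>b \<in> ideal_gen S\<close> by (rule ideal_genE)
  define r where "r i = (if i < k1 then r1 i else r2 (i - k1))" for i
  define s where "s i = (if i < k1 then s1 i else s2 (i - k1))" for i
  have "a + b = (\<Sum>i<k1+k2. r i * s i)"
    unfolding sum_lessThan_add a b r_def s_def by simp
  moreover have "\<forall>i<k1+k2. s i \<in> S"
    using a b by (auto simp: s_def)
  ultimately show "a + b \<in> ideal_gen S" by (rule ideal_genI)
next
  fix c a assume "a \<in> ideal_gen S"
  then obtain k :: nat and r s where a: "a = (\<Sum>i<k. r i * s i)" "\<forall>i<k. s i \<in> S"
    by (rule ideal_genE)
  have "c * a = (\<Sum>i<k. (c * r i) * s i)"
    unfolding a by (simp add: sum_distrib_left mult.assoc)
  then show "c * a \<in> ideal_gen S" using a(2) by (rule ideal_genI)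
qed

lemma ideal_gen_superset: "S \<subseteq> ideal_gen S"
proof
  show "x \<in> ideal_gen S" if "x \<in> S" for x
    using that by (intro ideal_genI[where k=1 and r="\<lambda>_. 1" and s="\<lambda>_. x"]) auto
qed

lemma ideal_gen_least: "is_ideal C \<Longrightarrow> S \<subseteq> C \<Longrightarrow> ideal_gen S \<subseteq> C"
  by (rule subsetI, erule ideal_genE) (auto intro!: sum_mem_ideal ideal_mult_left)

lemma is_ideal_ideal_prod: "is_ideal (ideal_prod A B)"
  unfolding ideal_prod_def by (rule is_ideal_ideal_gen)

lemma ideal_prodI: "a \<in> A \<Longrightarrow> b \<in> B \<Longrightarrow> a * b \<in> ideal_prod A B"
  unfolding ideal_prod_def by (rule subsetD[OF ideal_gen_superset]) blast

lemma ideal_prod_least: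
  "is_ideal C \<Longrightarrow> (\<And>a b. a \<in> A \<Longrightarrow> b \<in> B \<Longrightarrow> a * b \<in> C) \<Longrightarrow> ideal_prod A B \<subseteq> C"
  unfolding ideal_prod_def by (rule ideal_gen_least) blast+

lemma ideal_prod_comm: "ideal_prod A B = ideal_prod B A"
proof -
  have "ideal_prod A B \<subseteq> ideal_prod B A" for A B :: "'a::comm_ring_1 set"
    by (rule ideal_prod_least[OF is_ideal_ideal_prod]) (subst mult.commute, rule ideal_prodI)
  then show ?thesis by blast
qed

lemma ideal_prod_subset_left: "is_ideal A \<Longrightarrow> ideal_prod A B \<subseteq> A"
  by (rule ideal_prod_least) (auto intro: ideal_mult_right)

lemma ideal_prod_subset_right: "is_ideal B \<Longrightarrow> ideal_prod A B \<subseteq> B"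
  by (rule ideal_prod_least) (auto intro: ideal_mult_left)

lemma ideal_prod_mono: "A \<subseteq> A' \<Longrightarrow> B \<subseteq> B' \<Longrightarrow> ideal_prod A B \<subseteq> ideal_prod A' B'"
  by (rule ideal_prod_least) (auto intro: is_ideal_ideal_prod ideal_prodI)

lemma ideal_prod_UNIV: "is_ideal A \<Longrightarrow> ideal_prod A UNIV = A"
  using ideal_prod_subset_left ideal_prodI[of _ A 1 UNIV] by fastforce

lemma ideal_prod_assoc_subset: "ideal_prod (ideal_prod A B) C \<subseteq> ideal_prod A (ideal_prod B C)"
proof -
  let ?ABC = "ideal_prod A (ideal_prod B C)"
  define D where "D = {x. \<forall>c\<in>C. x * c \<in> ?ABC}"
  have "is_ideal D"
    unfolding is_ideal_def D_def
    by (auto simp: distrib_right mult.assoc intro: ideal_zero ideal_add ideal_mult_left is_ideal_ideal_prod)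
  moreover have "a * b \<in> D" if "a \<in> A" "b \<in> B" for a b
    using that unfolding D_def by (auto simp: mult.assoc intro!: ideal_prodI)
  ultimately have "ideal_prod A B \<subseteq> D" by (rule ideal_prod_least)
  then show ?thesis
    by (intro ideal_prod_least is_ideal_ideal_prod) (auto simp: D_def)
qed

lemma ideal_prod_assoc: "ideal_prod (ideal_prod A B) C = ideal_prod A (ideal_prod B C)"
proof
  have "ideal_prod A (ideal_prod B C) = ideal_prod (ideal_prod C B) A"
    by (simp add: ideal_prod_comm)
  also have "\<dots> \<subseteq> ideal_prod C (ideal_prod B A)" by (rule ideal_prod_assoc_subset)
  also have "\<dots> = ideal_prod (ideal_prod A B) C" by (simp add: ideal_prod_comm)
  finally show "ideal_prod A (ideal_prod B C) \<subseteq> ideal_prod (ideal_prod A B) C" .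
qed (rule ideal_prod_assoc_subset)

lemma ideal_prod_left_commute: "ideal_prod A (ideal_prod B C) = ideal_prod B (ideal_prod A C)"
  by (metis ideal_prod_assoc ideal_prod_comm)

lemma ideal_sumI: "a \<in> A \<Longrightarrow> b \<in> B \<Longrightarrow> a + b \<in> ideal_sum A B"
  unfolding ideal_sum_def by blast

lemma ideal_sumE: "x \<in> ideal_sum A B \<Longrightarrow> (\<And>a b. x = a + b \<Longrightarrow> a \<in> A \<Longrightarrow> b \<in> B \<Longrightarrow> P) \<Longrightarrow> P"
  unfolding ideal_sum_def by blast

lemma is_ideal_ideal_sum:
  assumes A: "is_ideal A" and B: "is_ideal B"
  shows "is_ideal (ideal_sum A B)"
proof -
  have "0 + 0 \<in> ideal_sum A B"
    using A B by (intro ideal_sumI ideal_zero)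
  moreover have "x + y \<in> ideal_sum A B" if "x \<in> ideal_sum A B" "y \<in> ideal_sum A B" for x y
  proof -
    from that obtain a b a' b' where "x = a + b" "y = a' + b'" "a \<in> A" "b \<in> B" "a' \<in> A" "b' \<in> B"
      by (elim ideal_sumE)
    then have "x + y = (a + a') + (b + b')" "a + a' \<in> A" "b + b' \<in> B"
      using A B by (simp_all add: ideal_add algebra_simps)
    then show ?thesis by (simp add: ideal_sumI)
  qed
  moreover have "c * x \<in> ideal_sum A B" if "x \<in> ideal_sum A B" for c x
  proof -
    from that obtain a b where "x = a + b" "a \<in> A" "b \<in> B"
      by (rule ideal_sumE)
    then show ?thesis
      using A B by (simp add: distrib_left ideal_sumI ideal_mult_left)
  qed
  ultimately show ?thesis unfolding is_ideal_def by simp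
qed

lemma ideal_sum_comm: "ideal_sum A B = ideal_sum B A"
  unfolding ideal_sum_def by (blast intro: add.commute)

lemma ideal_sum_mono: "A \<subseteq> A' \<Longrightarrow> B \<subseteq> B' \<Longrightarrow> ideal_sum A B \<subseteq> ideal_sum A' B'"
  unfolding ideal_sum_def by blast

lemma ideal_sum_subset_left: "is_ideal B \<Longrightarrow> A \<subseteq> ideal_sum A B"
  using ideal_sumI[OF _ ideal_zero, of _ A B] by auto

lemma ideal_sum_subset_right: "is_ideal A \<Longrightarrow> B \<subseteq> ideal_sum A B"
  using ideal_sumI[OF ideal_zero, of A _ B] by auto

lemma ideal_sum_UNIV_left: "is_ideal B \<Longrightarrow> ideal_sum UNIV B = UNIV"
  using ideal_sumI[of _ UNIV 0 B] by (force simp: ideal_zero)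

lemma ideal_sum_UNIV_right: "is_ideal A \<Longrightarrow> ideal_sum A UNIV = UNIV"
  using ideal_sumI[of 0 A _ UNIV] by (force simp: ideal_zero)

lemma ideal_sum_absorb_left: "is_ideal A \<Longrightarrow> ideal_sum A (ideal_sum A B) = ideal_sum A B"
proof
  assume A: "is_ideal A"
  show "ideal_sum A (ideal_sum A B) \<subseteq> ideal_sum A B"
  proof
    fix x assume "x \<in> ideal_sum A (ideal_sum A B)"
    then obtain a a' b where "x = a + (a' + b)" "a \<in> A" "a' \<in> A" "b \<in> B"
      by (elim ideal_sumE) blast
    then show "x \<in> ideal_sum A B"
      using A by (metis add.assoc ideal_add ideal_sumI)
  qed
  show "ideal_sum A B \<subseteq> ideal_sum A (ideal_sum A B)"
    using ideal_sumI[OF ideal_zero[OF A], of _ "ideal_sum A B"] by auto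
qed

lemma ideal_sum_absorb_right: "is_ideal B \<Longrightarrow> ideal_sum (ideal_sum A B) B = ideal_sum A B"
  using ideal_sum_absorb_left[of B A] by (simp only: ideal_sum_comm)

lemma ideal_prod_ideal_sum_subset:
  assumes "is_ideal A"
  shows "ideal_prod C (ideal_sum A B) \<subseteq> ideal_sum A (ideal_prod C B)"
proof (rule ideal_prod_least)
  show "is_ideal (ideal_sum A (ideal_prod C B))"
    by (intro is_ideal_ideal_sum assms is_ideal_ideal_prod)
  fix c y assume "c \<in> C" "y \<in> ideal_sum A B"
  then obtain a b where "y = a + b" "a \<in> A" "b \<in> B" by (elim ideal_sumE)
  then show "c * y \<in> ideal_sum A (ideal_prod C B)"
    using \<open>c \<in> C\<close> assms by (simp add: distrib_left ideal_sumI ideal_mult_left ideal_prodI)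
qed

lemma principal_idealI: "a * r \<in> principal_ideal a"
  unfolding principal_ideal_def by auto

lemma principal_idealE: "x \<in> principal_ideal a \<Longrightarrow> (\<And>r. x = a * r \<Longrightarrow> P) \<Longrightarrow> P"
  unfolding principal_ideal_def by blast

lemma is_ideal_principal_ideal: "is_ideal (principal_ideal a)"
  unfolding is_ideal_def
proof (intro conjI ballI allI)
  show "0 \<in> principal_ideal a"
    using principal_idealI[of a 0] by simp
  show "x + y \<in> principal_ideal a" if "x \<in> principal_ideal a" "y \<in> principal_ideal a" for x y
    using that by (auto elim!: principal_idealE simp flip: distrib_left intro: principal_idealI)
  show "c * x \<in> principal_ideal a" if "x \<in> principal_ideal a" for c x
    using that by (auto elim!: principal_idealE simp: mult.left_commute[of c] intro: principal_idealI)
qed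

lemma principal_ideal_1: "principal_ideal 1 = UNIV"
  unfolding principal_ideal_def by auto

lemma ideal_prod_principal_ideal:
  "ideal_prod (principal_ideal a) (principal_ideal b) = principal_ideal (a * b)"
proof
  show "ideal_prod (principal_ideal a) (principal_ideal b) \<subseteq> principal_ideal (a * b)"
  proof (rule ideal_prod_least[OF is_ideal_principal_ideal])
    fix x y assume "x \<in> principal_ideal a" "y \<in> principal_ideal b"
    then obtain r s where "x = a * r" "y = b * s" by (elim principal_idealE)
    then have "x * y = (a * b) * (r * s)" by (simp add: algebra_simps)
    then show "x * y \<in> principal_ideal (a * b)" by (simp add: principal_idealI)
  qed
  show "principal_ideal (a * b) \<subseteq> ideal_prod (principal_ideal a) (principal_ideal b)"
    using ideal_prodI[OF principal_idealI[of a 1] principal_idealI[of b]]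
    by (auto elim!: principal_idealE simp: mult.assoc)
qed

lemma is_ideal_ideal_pow: "is_ideal (ideal_pow I n)"
  by (cases n) (simp_all add: is_ideal_ideal_prod)

lemma ideal_pow_1: "is_ideal I \<Longrightarrow> ideal_pow I 1 = I"
  by (simp add: ideal_prod_UNIV)

lemma ideal_pow_antimono: "m \<le> n \<Longrightarrow> ideal_pow I n \<subseteq> ideal_pow I m"
proof (induction n)
  case (Suc n)
  have "ideal_pow I (Suc n) \<subseteq> ideal_pow I n"
    by (simp add: ideal_prod_subset_right is_ideal_ideal_pow)
  with Suc show ?case by (cases "m = Suc n") auto
qed simp

lemma ideal_pow_mono: "A \<subseteq> B \<Longrightarrow> ideal_pow A k \<subseteq> ideal_pow B k"
  by (induction k) (simp_all add: ideal_prod_mono)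

lemma power_mem_ideal_pow: "x \<in> A \<Longrightarrow> x ^ k \<in> ideal_pow A k"
  by (induction k) (simp_all add: ideal_prodI)

lemma ideal_pow_ideal_prod: "ideal_pow (ideal_prod A B) n = ideal_prod (ideal_pow A n) (ideal_pow B n)"
  by (induction n) (simp_all add: ideal_prod_UNIV ideal_prod_assoc ideal_prod_left_commute[of B])

lemma ideal_pow_principal_ideal: "ideal_pow (principal_ideal a) n = principal_ideal (a ^ n)"
  by (induction n) (simp_all add: principal_ideal_1 ideal_prod_principal_ideal)

lemma ideal_pow_ideal_sum_Suc_subset:
  assumes A: "is_ideal A" and B: "is_ideal B"
  shows "ideal_pow (ideal_sum A B) (Suc j)
    \<subseteq> ideal_sum (ideal_pow A (Suc j)) (ideal_prod B (ideal_pow (ideal_sum A B) j))"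
    (is "ideal_pow ?S (Suc j) \<subseteq> ?T j")
proof (induction j)
  case 0
  have "ideal_prod ?S UNIV \<subseteq> ideal_sum (ideal_prod A UNIV) (ideal_prod B UNIV)"
    using A B by (simp add: ideal_prod_UNIV is_ideal_ideal_sum)
  then show ?case by simp
next
  case (Suc j)
  show ?case unfolding ideal_pow.simps(2)[of ?S "Suc j"]
  proof (rule ideal_prod_least)
    show "is_ideal (?T (Suc j))"
      by (intro is_ideal_ideal_sum is_ideal_ideal_pow is_ideal_ideal_prod)
    fix s y assume "s \<in> ?S" "y \<in> ideal_pow ?S (Suc j)"
    then obtain a b a' t where ab: "s = a + b" "a \<in> A" "b \<in> B"
      and a't: "y = a' + t" "a' \<in> ideal_pow A (Suc j)" "t \<in> ideal_prod B (ideal_pow ?S j)"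
      using Suc.IH by (blast elim: ideal_sumE)
    have "a \<in> ?S"
      using ab(2) ideal_sumI[OF _ ideal_zero[OF B]] by fastforce
    then have "a * t \<in> ideal_prod ?S (ideal_prod B (ideal_pow ?S j))"
      using a't(3) by (rule ideal_prodI)
    then have "a * t \<in> ideal_prod B (ideal_pow ?S (Suc j))"
      by (simp add: ideal_prod_left_commute[of ?S B])
    moreover have "b * y \<in> ideal_prod B (ideal_pow ?S (Suc j))"
      using ab(3) \<open>y \<in> _\<close> by (rule ideal_prodI)
    moreover have "s * y = a * a' + (a * t + b * y)"
      by (simp add: ab a't algebra_simps)
    moreover have "a * a' \<in> ideal_pow A (Suc (Suc j))"
      using ab(2) a't(2) by (simp only: ideal_pow.simps ideal_prodI)
    ultimately show "s * y \<in> ?T (Suc j)"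
      by (simp only: ideal_sumI ideal_add[OF is_ideal_ideal_prod])
  qed
qed

lemma ideal_pow_ideal_sum_subset:
  assumes A: "is_ideal A" and B: "is_ideal B" and pq: "p + q \<le> m + 1"
  shows "ideal_pow (ideal_sum A B) m \<subseteq> ideal_sum (ideal_pow A p) (ideal_pow B q)"
  using pq
proof (induction m arbitrary: q)
  case 0
  then have "p = 0 \<or> q = 0" by arith
  then show ?case
    by (auto simp: ideal_sum_UNIV_left ideal_sum_UNIV_right is_ideal_ideal_pow)
next
  case (Suc m)
  show ?case
  proof (cases q)
    case 0
    then show ?thesis by (simp add: ideal_sum_UNIV_right is_ideal_ideal_pow)
  next
    case (Suc q')
    with Suc.prems have "p \<le> Suc m" "p + q' \<le> m + 1" by simp_all
    have "ideal_pow (ideal_sum A B) (Suc m)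
        \<subseteq> ideal_sum (ideal_pow A (Suc m)) (ideal_prod B (ideal_pow (ideal_sum A B) m))"
      by (rule ideal_pow_ideal_sum_Suc_subset[OF A B])
    also have "\<dots> \<subseteq> ideal_sum (ideal_pow A p) (ideal_prod B (ideal_sum (ideal_pow A p) (ideal_pow B q')))"
      using Suc.IH[OF \<open>p + q' \<le> m + 1\<close>] \<open>p \<le> Suc m\<close>
      by (intro ideal_sum_mono ideal_prod_mono ideal_pow_antimono) auto
    also have "\<dots> \<subseteq> ideal_sum (ideal_pow A p) (ideal_sum (ideal_pow A p) (ideal_prod B (ideal_pow B q')))"
      by (intro ideal_sum_mono ideal_prod_ideal_sum_subset is_ideal_ideal_pow order_refl)
    also have "\<dots> = ideal_sum (ideal_pow A p) (ideal_pow B q)"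
      using \<open>q = Suc q'\<close> by (simp add: ideal_sum_absorb_left is_ideal_ideal_pow)
    finally show ?thesis .
  qed
qed

section \<open>Invertible ideals and dual bases\<close>

lemma nonzerodivisor_cancel: "nonzerodivisor d \<Longrightarrow> d * x = d * y \<Longrightarrow> x = y"
  unfolding nonzerodivisor_def by (metis eq_iff_diff_eq_0 right_diff_distrib)

lemma nonzerodivisor_mult: "nonzerodivisor a \<Longrightarrow> nonzerodivisor b \<Longrightarrow> nonzerodivisor (a * b)"
  unfolding nonzerodivisor_def by (metis mult.assoc)

lemma nonzerodivisor_power: "nonzerodivisor d \<Longrightarrow> nonzerodivisor (d ^ n)"
  by (induction n) (simp_all add: nonzerodivisor_mult, simp add: nonzerodivisor_def)

lemma invertible_ideal_pow: "invertible_ideal I \<Longrightarrow> invertible_ideal (ideal_pow I n)"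
  unfolding invertible_ideal_def
  by (metis is_ideal_ideal_pow nonzerodivisor_power ideal_pow_ideal_prod ideal_pow_principal_ideal)

lemma ideal_prodE:
  assumes "x \<in> ideal_prod A B" "is_ideal A"
  obtains k :: nat and a b where "x = (\<Sum>i<k. a i * b i)" "\<forall>i<k. a i \<in> A \<and> b i \<in> B"
proof -
  from assms(1) obtain k :: nat and r s where x: "x = (\<Sum>i<k. r i * s i)"
      and s: "\<forall>i<k. s i \<in> {a * b |a b. a \<in> A \<and> b \<in> B}"
    unfolding ideal_prod_def by (rule ideal_genE)
  from s obtain a b where ab: "\<And>i. i < k \<Longrightarrow> s i = a i * b i \<and> a i \<in> A \<and> b i \<in> B"
    by (simp only: mem_Collect_eq) metis
  show ?thesis
  proof
    show "x = (\<Sum>i<k. (r i * a i) * b i)"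
      unfolding x using ab by (intro sum.cong) (simp_all add: mult.assoc)
    show "\<forall>i<k. r i * a i \<in> A \<and> b i \<in> B"
      using ab assms(2) by (simp add: ideal_mult_left)
  qed
qed

locale ideal_dual_basis =
  fixes L :: "'r::comm_ring_1 set" and r :: nat and a :: "nat \<Rightarrow> 'r" and \<phi> :: "nat \<Rightarrow> 'r \<Rightarrow> 'r"
  assumes L_ideal: "is_ideal L"
    and basis_mem: "i < r \<Longrightarrow> a i \<in> L"
    and expansion: "x \<in> L \<Longrightarrow> (\<Sum>i<r. a i * \<phi> i x) = x"
    and coord_add: "i < r \<Longrightarrow> x \<in> L \<Longrightarrow> y \<in> L \<Longrightarrow> \<phi> i (x + y) = \<phi> i x + \<phi> i y"
    and coord_mult: "i < r \<Longrightarrow> x \<in> L \<Longrightarrow> \<phi> i (c * x) = c * \<phi> i x"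
begin

lemma coord_zero: "i < r \<Longrightarrow> \<phi> i 0 = 0"
  using coord_mult[of i 0 0] ideal_zero[OF L_ideal] by simp

lemma coord_sum:
  assumes "i < r" "\<And>t. t < (n::nat) \<Longrightarrow> x t \<in> L"
  shows "\<phi> i (\<Sum>t<n. b t * x t) = (\<Sum>t<n. b t * \<phi> i (x t))"
  using assms(2)
proof (induction n)
  case (Suc n)
  have "(\<Sum>t<n. b t * x t) \<in> L" "b n * x n \<in> L"
    using Suc.prems L_ideal by (auto intro!: sum_mem_ideal ideal_mult_left)
  with Suc show ?case by (simp add: coord_add[OF assms(1)] coord_mult[OF assms(1)])
qed (simp add: coord_zero assms(1))

lemma coord_of_coords:
  assumes "j < r" "x \<in> L"
  shows "(\<Sum>i<r. \<phi> i x * \<phi> j (a i)) = \<phi> j x"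
proof -
  have "(\<Sum>i<r. \<phi> i x * \<phi> j (a i)) = \<phi> j (\<Sum>i<r. \<phi> i x * a i)"
    by (rule coord_sum[OF assms(1) basis_mem, symmetric])
  also have "(\<Sum>i<r. \<phi> i x * a i) = x"
    using expansion[OF assms(2)] by (simp add: mult.commute)
  finally show ?thesis .
qed

lemma coord_ideal_prod:
  assumes i: "i < r" and A: "is_ideal A" and x: "x \<in> ideal_prod L A"
  shows "\<phi> i x \<in> A"
proof -
  obtain k :: nat and l \<alpha> where x_eq: "x = (\<Sum>t<k. l t * \<alpha> t)" and l\<alpha>: "\<forall>t<k. l t \<in> L \<and> \<alpha> t \<in> A"
    using x L_ideal by (rule ideal_prodE)
  have "\<phi> i x = (\<Sum>t<k. \<alpha> t * \<phi> i (l t))"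
    unfolding x_eq using coord_sum[OF i, of k l \<alpha>] l\<alpha> by (simp add: mult.commute)
  also have "\<dots> \<in> A"
    using l\<alpha> A by (auto intro!: sum_mem_ideal ideal_mult_right)
  finally show ?thesis .
qed

end

text \<open>If \<open>L J = d R\<close> with \<open>d\<close> a nonzerodivisor and \<open>\<Sum> a i * b i = d\<close> with \<open>a i \<in> L\<close>, \<open>b i \<in> J\<close>,
  then \<open>\<phi> i x = x * b i / d\<close> are coordinate functions for the generators \<open>a i\<close>.\<close>

lemma invertible_ideal_dual_basis:
  assumes L: "is_ideal L" and "invertible_ideal L"
  obtains r a \<phi> where "ideal_dual_basis L r a \<phi>"
proof -
  obtain J d where J: "is_ideal J" and d: "nonzerodivisor d" and LJ: "ideal_prod L J = principal_ideal d"
    using \<open>invertible_ideal L\<close> unfolding invertible_ideal_def by blast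
  have "d \<in> ideal_prod L J"
    unfolding LJ using principal_idealI[of d 1] by simp
  then obtain r :: nat and a b where d_eq: "d = (\<Sum>i<r. a i * b i)" and ab: "\<forall>i<r. a i \<in> L \<and> b i \<in> J"
    using L by (rule ideal_prodE)
  define \<phi> where "\<phi> i x = (THE y. d * y = x * b i)" for i x
  have \<phi>: "d * \<phi> i x = x * b i" if "x \<in> L" "i < r" for x i
  proof -
    have "x * b i \<in> principal_ideal d"
      unfolding LJ[symmetric] using that ab by (simp add: ideal_prodI)
    then obtain y where y: "x * b i = d * y" by (rule principal_idealE)
    then have "\<phi> i x = y"
      unfolding \<phi>_def by (auto intro: nonzerodivisor_cancel[OF d])
    with y show ?thesis by simp
  qed
  have "ideal_dual_basis L r a \<phi>"
  proof
    show "a i \<in> L" if "i < r" for i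
      using that ab by simp
    show "(\<Sum>i<r. a i * \<phi> i x) = x" if x: "x \<in> L" for x
    proof (rule nonzerodivisor_cancel[OF d])
      have "d * (\<Sum>i<r. a i * \<phi> i x) = (\<Sum>i<r. a i * (d * \<phi> i x))"
        by (simp add: sum_distrib_left mult.left_commute)
      also have "\<dots> = (\<Sum>i<r. a i * (x * b i))"
        using x by (intro sum.cong) (simp_all add: \<phi>)
      also have "\<dots> = x * d"
        by (simp add: d_eq sum_distrib_left algebra_simps)
      finally show "d * (\<Sum>i<r. a i * \<phi> i x) = d * x" by (simp add: mult.commute)
    qed
    show "\<phi> i (x + y) = \<phi> i x + \<phi> i y" if "i < r" "x \<in> L" "y \<in> L" for i x y
      by (rule nonzerodivisor_cancel[OF d]) (use that L in \<open>simp add: \<phi> ideal_add distrib_left distrib_right\<close>)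
    show "\<phi> i (c * x) = c * \<phi> i x" if "i < r" "x \<in> L" for i x c
      by (rule nonzerodivisor_cancel[OF d]) (use that L in \<open>simp add: \<phi> ideal_mult_left mult.left_commute\<close>)
  qed (rule L)
  then show ?thesis by (rule that)
qed

section \<open>Artin--Rees estimates for \<open>K = \<pi>R + I\<close>\<close>

locale pi_torsion_bounded =
  fixes I :: "'r::comm_ring_1 set" and \<pi> :: 'r and N :: nat
  assumes I_ideal: "is_ideal I"
    and torsion_bound: "\<pi> ^ k * x \<in> I \<Longrightarrow> \<pi> ^ N * x \<in> I"
begin

abbreviation K :: "'r set" where "K \<equiv> ideal_sum (principal_ideal \<pi>) I"

lemma principal_ideal_subset_K: "principal_ideal \<pi> \<subseteq> K"
  by (rule ideal_sum_subset_left[OF I_ideal])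

text \<open>Write \<open>x = \<pi>^(m+N+1) \<rho> + t\<close> with \<open>t \<in> I K^(m+N)\<close>; as \<open>x, t \<in> I\<close>, the torsion bound puts
  \<open>\<pi>^N \<rho>\<close> into \<open>I\<close>.\<close>

lemma artin_rees_base:
  assumes "x \<in> I" "x \<in> ideal_pow K (m + N + 1)"
  shows "x \<in> ideal_prod I (ideal_pow K m)"
proof -
  have "ideal_pow K (Suc (m + N))
      \<subseteq> ideal_sum (principal_ideal (\<pi> ^ Suc (m + N))) (ideal_prod I (ideal_pow K (m + N)))"
    using ideal_pow_ideal_sum_Suc_subset[OF is_ideal_principal_ideal I_ideal, where j="m + N"]
    unfolding ideal_pow_principal_ideal .
  moreover have "x \<in> ideal_pow K (Suc (m + N))"
    using assms(2) by (simp only: Suc_eq_plus1)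
  ultimately obtain u t where x: "x = u + t" and u: "u \<in> principal_ideal (\<pi> ^ Suc (m + N))"
    and t: "t \<in> ideal_prod I (ideal_pow K (m + N))"
    by (blast elim: ideal_sumE)
  from u obtain \<rho> where \<rho>: "u = \<pi> ^ Suc (m + N) * \<rho>" by (rule principal_idealE)
  have "t \<in> I"
    using t ideal_prod_subset_left[OF I_ideal] by blast
  then have "\<pi> ^ Suc (m + N) * \<rho> \<in> I"
    using assms(1) x \<rho> ideal_diff[OF I_ideal] by fastforce
  then have "\<pi> * (\<pi> ^ N * \<rho>) \<in> I"
    by (intro ideal_mult_left[OF I_ideal, of "\<pi> ^ N * \<rho>"] torsion_bound)
  moreover have "\<pi> ^ m \<in> ideal_pow K m"
    using principal_ideal_subset_K principal_idealI[of \<pi> 1] by (intro power_mem_ideal_pow) auto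
  ultimately have "u \<in> ideal_prod I (ideal_pow K m)"
    using ideal_prodI \<rho> by (fastforce simp: power_add algebra_simps)
  moreover have "t \<in> ideal_prod I (ideal_pow K m)"
    using t ideal_prod_mono[OF order_refl ideal_pow_antimono[of m "m + N"]] by auto
  ultimately show ?thesis
    unfolding x by (rule ideal_add[OF is_ideal_ideal_prod])
qed

lemma artin_rees:
  assumes "invertible_ideal I"
  shows "x \<in> ideal_pow I n \<Longrightarrow> x \<in> ideal_pow K (m + n * (N + 1)) \<Longrightarrow>
    x \<in> ideal_prod (ideal_pow I n) (ideal_pow K m)"
proof (induction n arbitrary: m x)
  case 0
  then show ?case by (simp add: ideal_prod_comm[of UNIV] ideal_prod_UNIV is_ideal_ideal_pow)
next
  case (Suc n)
  have x_In: "x \<in> ideal_prod (ideal_pow I n) I"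
    using Suc.prems(1) by (simp add: ideal_prod_comm)
  have "x \<in> ideal_pow I n"
    using Suc.prems(1) ideal_pow_antimono[of n "Suc n" I] by auto
  moreover have "x \<in> ideal_pow K ((m + N + 1) + n * (N + 1))"
    using Suc.prems(2) by (simp add: algebra_simps)
  ultimately have x_InK: "x \<in> ideal_prod (ideal_pow I n) (ideal_pow K (m + N + 1))"
    by (rule Suc.IH)
  obtain r a \<phi> where "ideal_dual_basis (ideal_pow I n) r a \<phi>"
    using is_ideal_ideal_pow invertible_ideal_pow[OF assms]
    by (rule invertible_ideal_dual_basis)
  then interpret ideal_dual_basis "ideal_pow I n" r a \<phi> .
  have "a i * \<phi> i x \<in> ideal_prod (ideal_pow I (Suc n)) (ideal_pow K m)" if "i < r" for i
  proof -
    have "\<phi> i x \<in> I"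
      using coord_ideal_prod[OF that I_ideal x_In] .
    moreover have "\<phi> i x \<in> ideal_pow K (m + N + 1)"
      using coord_ideal_prod[OF that is_ideal_ideal_pow x_InK] .
    ultimately have "\<phi> i x \<in> ideal_prod I (ideal_pow K m)"
      by (rule artin_rees_base)
    then have "a i * \<phi> i x \<in> ideal_prod (ideal_pow I n) (ideal_prod I (ideal_pow K m))"
      using basis_mem[OF that] by (simp add: ideal_prodI)
    then show ?thesis
      by (simp add: ideal_prod_left_commute[of "ideal_pow I n"] ideal_prod_assoc)
  qed
  then have "(\<Sum>i<r. a i * \<phi> i x) \<in> ideal_prod (ideal_pow I (Suc n)) (ideal_pow K m)"
    by (intro sum_mem_ideal is_ideal_ideal_prod) auto
  with expansion \<open>x \<in> ideal_pow I n\<close> show ?case by simp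
qed

lemma torsion_bound_mod_pi_power:
  assumes "\<pi> ^ k * b \<in> ideal_sum (ideal_pow K (m + k + 1)) I"
  shows "\<pi> ^ N * b \<in> ideal_sum (principal_ideal (\<pi> ^ m)) I"
proof -
  have "ideal_pow K (m + k + 1) \<subseteq> ideal_sum (principal_ideal (\<pi> ^ (m + k + 1))) I"
    using ideal_pow_ideal_sum_subset[OF is_ideal_principal_ideal[of \<pi>] I_ideal, where p="m + k + 1" and q=1 and m="m + k + 1"]
    unfolding ideal_pow_principal_ideal ideal_pow_1[OF I_ideal] by simp
  then have "\<pi> ^ k * b \<in> ideal_sum (ideal_sum (principal_ideal (\<pi> ^ (m + k + 1))) I) I"
    using assms ideal_sum_mono[OF _ order_refl] by blast
  then obtain \<rho> i where "\<pi> ^ k * b = \<pi> ^ (m + k + 1) * \<rho> + i" "i \<in> I"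
    unfolding ideal_sum_absorb_right[OF I_ideal] by (blast elim: ideal_sumE principal_idealE)
  then have "\<pi> ^ k * (b - \<pi> ^ (m + 1) * \<rho>) \<in> I"
    by (simp add: algebra_simps power_add)
  then have "\<pi> ^ N * (b - \<pi> ^ (m + 1) * \<rho>) \<in> I"
    by (rule torsion_bound)
  moreover have "\<pi> ^ N * b = \<pi> ^ m * (\<pi> ^ (N + 1) * \<rho>) + \<pi> ^ N * (b - \<pi> ^ (m + 1) * \<rho>)"
    by (simp add: algebra_simps power_add)
  ultimately show ?thesis
    by (simp add: ideal_sumI principal_idealI)
qed

end

section \<open>Submodules \<open>AM\<close> and flatness\<close>

context module
begin

lemma submodI: "y = (\<Sum>i<k. scale (a i) (m i)) \<Longrightarrow> \<forall>i<(k::nat). a i \<in> A \<Longrightarrow> y \<in> submod scale A"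
  unfolding submod_def by blast

lemma submodE:
  "y \<in> submod scale A \<Longrightarrow> (\<And>k a m. y = (\<Sum>i<k. scale (a i) (m i)) \<Longrightarrow> \<forall>i<(k::nat). a i \<in> A \<Longrightarrow> P) \<Longrightarrow> P"
  unfolding submod_def by blast

lemma subspace_submod: "subspace (submod scale A)"
  unfolding subspace_def
proof (intro conjI ballI allI)
  show "0 \<in> submod scale A"
    by (rule submodI[where k=0]) auto
next
  fix x y assume "x \<in> submod scale A" "y \<in> submod scale A"
  obtain k1 :: nat and a1 m1 where x: "x = (\<Sum>i<k1. scale (a1 i) (m1 i))" "\<forall>i<k1. a1 i \<in> A"
    using \<open>x \<in> submod scale A\<close> by (rule submodE)
  obtain k2 :: nat and a2 m2 where y: "y = (\<Sum>i<k2. scale (a2 i) (m2 i))" "\<forall>i<k2. a2 i \<in> A"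
    using \<open>y \<in> submod scale A\<close> by (rule submodE)
  define a where "a i = (if i < k1 then a1 i else a2 (i - k1))" for i
  define m where "m i = (if i < k1 then m1 i else m2 (i - k1))" for i
  have "x + y = (\<Sum>i<k1+k2. scale (a i) (m i))"
    unfolding sum_lessThan_add x y a_def m_def by simp
  moreover have "\<forall>i<k1+k2. a i \<in> A"
    using x y by (auto simp: a_def)
  ultimately show "x + y \<in> submod scale A" by (rule submodI)
next
  fix c x assume "x \<in> submod scale A"
  then obtain k :: nat and a m where x: "x = (\<Sum>i<k. scale (a i) (m i))" "\<forall>i<k. a i \<in> A"
    by (rule submodE)
  have "scale c x = (\<Sum>i<k. scale (a i) (scale c (m i)))"
    unfolding x by (simp add: scale_sum_right mult.commute)
  then show "scale c x \<in> submod scale A" using x(2) by (rule submodI)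
qed

lemma submod_zero: "0 \<in> submod scale A"
  and submod_add: "x \<in> submod scale A \<Longrightarrow> y \<in> submod scale A \<Longrightarrow> x + y \<in> submod scale A"
  and submod_diff: "x \<in> submod scale A \<Longrightarrow> y \<in> submod scale A \<Longrightarrow> x - y \<in> submod scale A"
  and submod_scale: "x \<in> submod scale A \<Longrightarrow> scale c x \<in> submod scale A"
  and submod_sum: "(\<And>i. i \<in> B \<Longrightarrow> f i \<in> submod scale A) \<Longrightarrow> sum f B \<in> submod scale A"
  by (simp_all add: subspace_0 subspace_add subspace_diff subspace_scale subspace_sum subspace_submod)

lemma submod_mem: "a \<in> A \<Longrightarrow> scale a m \<in> submod scale A"
  by (rule submodI[where k=1 and a="\<lambda>_. a" and m="\<lambda>_. m"]) auto

lemma submod_least: "subspace S \<Longrightarrow> (\<And>a m. a \<in> A \<Longrightarrow> scale a m \<in> S) \<Longrightarrow> submod scale A \<subseteq> S"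
  by (auto elim!: submodE intro!: subspace_sum)

lemma submod_mono: "A \<subseteq> B \<Longrightarrow> submod scale A \<subseteq> submod scale B"
  by (rule submod_least[OF subspace_submod]) (auto intro: submod_mem)

lemma submod_UNIV: "x \<in> submod scale UNIV"
  using submod_mem[of 1 UNIV x] by simp

lemma subspace_sums: "subspace P \<Longrightarrow> subspace Q \<Longrightarrow> subspace {y + z |y z. y \<in> P \<and> z \<in> Q}"
  unfolding subspace_def
proof (intro conjI ballI allI)
  assume P: "0 \<in> P \<and> (\<forall>x\<in>P. \<forall>y\<in>P. x + y \<in> P) \<and> (\<forall>c. \<forall>x\<in>P. scale c x \<in> P)"
    and Q: "0 \<in> Q \<and> (\<forall>x\<in>Q. \<forall>y\<in>Q. x + y \<in> Q) \<and> (\<forall>c. \<forall>x\<in>Q. scale c x \<in> Q)"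
  show "0 \<in> {y + z |y z. y \<in> P \<and> z \<in> Q}"
    using P Q by force
  show "x + x' \<in> {y + z |y z. y \<in> P \<and> z \<in> Q}"
    if "x \<in> {y + z |y z. y \<in> P \<and> z \<in> Q}" "x' \<in> {y + z |y z. y \<in> P \<and> z \<in> Q}" for x x'
  proof -
    from that obtain y z y' z' where "x = y + z" "x' = y' + z'" "y \<in> P" "z \<in> Q" "y' \<in> P" "z' \<in> Q"
      by blast
    moreover have "(y + z) + (y' + z') = (y + y') + (z + z')"
      by (simp add: algebra_simps)
    ultimately show ?thesis using P Q by blast
  qed
  show "scale c x \<in> {y + z |y z. y \<in> P \<and> z \<in> Q}" if "x \<in> {y + z |y z. y \<in> P \<and> z \<in> Q}" for c x
    using that P Q by (blast intro: scale_right_distrib)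
qed

lemma submod_ideal_sum:
  assumes "is_ideal A" "is_ideal B"
  shows "submod scale (ideal_sum A B) = {y + z |y z. y \<in> submod scale A \<and> z \<in> submod scale B}"
proof
  show "submod scale (ideal_sum A B) \<subseteq> {y + z |y z. y \<in> submod scale A \<and> z \<in> submod scale B}"
  proof (rule submod_least[OF subspace_sums[OF subspace_submod subspace_submod]])
    fix c m assume "c \<in> ideal_sum A B"
    then obtain a b where "c = a + b" "a \<in> A" "b \<in> B" by (rule ideal_sumE)
    moreover have "scale (a + b) m = scale a m + scale b m" by (rule scale_left_distrib)
    ultimately show "scale c m \<in> {y + z |y z. y \<in> submod scale A \<and> z \<in> submod scale B}"
      using submod_mem by blast
  qed
  have "A \<subseteq> ideal_sum A B" "B \<subseteq> ideal_sum A B"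
    using assms by (simp_all add: ideal_sum_subset_left ideal_sum_subset_right)
  then show "{y + z |y z. y \<in> submod scale A \<and> z \<in> submod scale B} \<subseteq> submod scale (ideal_sum A B)"
    by (auto dest!: submod_mono intro!: submod_add)
qed

lemma adic_nbhd_submod:
  "is_ideal L \<Longrightarrow> adic_nbhd scale (submod scale L) J k = submod scale (ideal_sum (ideal_pow J k) L)"
  unfolding adic_nbhd_def by (simp add: submod_ideal_sum is_ideal_ideal_pow)

lemma adic_nbhd_zero: "adic_nbhd scale {0} K k = submod scale (ideal_pow K k)"
  unfolding adic_nbhd_def by auto

lemma quot_flat_UNIV: "quot_flat scale UNIV"
  unfolding quot_flat_def by (auto intro: exI[of _ 0] submod_UNIV)

text \<open>Flatness of \<open>M/AM\<close> over \<open>R/A\<close> in the form \<open>(BM :\<^sub>M s) \<subseteq> ((A + B) :\<^sub>R s) M + AM\<close>.\<close>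

lemma quot_flat_colon:
  assumes flat: "quot_flat scale A" and B: "is_ideal B" and sx: "scale s x \<in> submod scale B"
  obtains l :: nat and \<beta> Y where "x - (\<Sum>j<l. scale (\<beta> j) (Y j)) \<in> submod scale A"
    and "\<forall>j<l. s * \<beta> j \<in> ideal_sum A B"
proof -
  from sx obtain k :: nat and c m where sx_eq: "scale s x = (\<Sum>i<k. scale (c i) (m i))"
      and c: "\<forall>i<k. c i \<in> B"
    by (rule submodE)
  define \<alpha> where "\<alpha> i = (if i = 0 then s else - c (i - 1))" for i
  define X where "X i = (if i = 0 then x else m (i - 1))" for i
  have "(\<Sum>i<Suc k. scale (\<alpha> i) (X i)) = scale s x - (\<Sum>i<k. scale (c i) (m i))"
    unfolding sum.lessThan_Suc_shift by (simp add: \<alpha>_def X_def sum_negf)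
  then have "(\<Sum>i<Suc k. scale (\<alpha> i) (X i)) \<in> submod scale A"
    by (simp add: sx_eq submod_zero)
  then obtain l :: nat and \<beta> Y where
    X: "\<forall>i<Suc k. X i - (\<Sum>j<l. scale (\<beta> i j) (Y j)) \<in> submod scale A" and
    \<alpha>\<beta>: "\<forall>j<l. (\<Sum>i<Suc k. \<alpha> i * \<beta> i j) \<in> A"
    using flat unfolding quot_flat_def by blast
  show ?thesis
  proof
    show "x - (\<Sum>j<l. scale (\<beta> 0 j) (Y j)) \<in> submod scale A"
      using X by (auto simp: X_def)
    show "\<forall>j<l. s * \<beta> 0 j \<in> ideal_sum A B"
    proof (intro allI impI)
      fix j assume "j < l"
      have "s * \<beta> 0 j = (\<Sum>i<Suc k. \<alpha> i * \<beta> i j) + (\<Sum>i<k. c i * \<beta> (Suc i) j)"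
        unfolding sum.lessThan_Suc_shift by (simp add: \<alpha>_def sum_negf)
      moreover have "(\<Sum>i<k. c i * \<beta> (Suc i) j) \<in> B"
        using c B by (auto intro!: sum_mem_ideal ideal_mult_right)
      ultimately show "s * \<beta> 0 j \<in> ideal_sum A B"
        using \<alpha>\<beta> \<open>j < l\<close> by (simp add: ideal_sumI)
    qed
  qed
qed

end

section \<open>Relations of the tensor product \<open>L \<otimes>\<^sub>R M\<close>\<close>

text \<open>With the pointwise group structure on \<open>'a \<Rightarrow> int\<close>, \<open>x - y \<in> zspan (tensor_rels scale L)\<close>
  says that \<open>x\<close> and \<open>y\<close> represent the same element of \<open>L \<otimes>\<^sub>R M\<close>.\<close>

lemma sum_fun_apply: "(\<Sum>i\<in>A. f i) x = (\<Sum>i\<in>A. f i x)"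
  by (induction A rule: infinite_finite_induct) simp_all

lemma of_int_fun_apply: "(of_int c :: 'a \<Rightarrow> 'b::ring_1) x = of_int c"
  by (cases c rule: int_cases2) simp_all

lemma zspan_zero: "0 \<in> zspan G"
  unfolding zero_fun_def by (rule zspan.zero)

lemma zspan_gen: "g \<in> G \<Longrightarrow> g \<in> zspan G"
  using zspan.add[OF zspan.zero, of g G] by simp

lemma zspan_add:
  assumes x: "x \<in> zspan G" and y: "y \<in> zspan G"
  shows "x + y \<in> zspan G"
  using y
proof (induction y rule: zspan.induct)
  case zero
  then show ?case using x by (simp add: plus_fun_def)
next
  case (add y g)
  then show ?case using zspan.add[OF add.IH add.hyps(2)] by (simp add: plus_fun_def add.assoc)
next
  case (sub y g)
  then show ?case using zspan.sub[OF sub.IH sub.hyps(2)] by (simp add: plus_fun_def add_diff_eq)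
qed

lemma zspan_uminus: "x \<in> zspan G \<Longrightarrow> - x \<in> zspan G"
proof (induction x rule: zspan.induct)
  case zero
  then show ?case using zspan.zero by (simp add: fun_Compl_def)
next
  case (add y g)
  then show ?case using zspan.sub[OF add.IH add.hyps(2)] by (simp add: fun_Compl_def)
next
  case (sub y g)
  then show ?case using zspan.add[OF sub.IH sub.hyps(2)] by (simp add: fun_Compl_def add.commute)
qed

lemma zspan_diff: "x \<in> zspan G \<Longrightarrow> y \<in> zspan G \<Longrightarrow> x - y \<in> zspan G"
  unfolding diff_conv_add_uminus by (intro zspan_add zspan_uminus)

lemma zspan_sum: "(\<And>i. i \<in> A \<Longrightarrow> f i \<in> zspan G) \<Longrightarrow> sum f A \<in> zspan G"
  by (induction A rule: infinite_finite_induct) (simp_all add: zspan_zero zspan_add)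

lemma zspan_of_int_mult:
  assumes x: "x \<in> zspan G"
  shows "of_int c * x \<in> zspan G"
proof -
  have nat: "of_nat n * x \<in> zspan G" for n
  proof (induction n)
    case 0
    show ?case using zspan_zero by (simp only: of_nat_0 mult_zero_left)
  next
    case (Suc n)
    have "of_nat (Suc n) * x = x + of_nat n * x"
      by (simp only: of_nat_Suc distrib_right mult_1_left add.commute)
    with zspan_add[OF x Suc.IH] show ?case by (simp only:)
  qed
  show ?thesis
  proof (cases c rule: int_cases2)
    case (nonneg n)
    with nat show ?thesis by (simp only: of_int_of_nat_eq)
  next
    case (nonpos n)
    with zspan_uminus[OF nat] show ?thesis by (simp only: of_int_minus of_int_of_nat_eq mult_minus_left)
  qed
qed

lemma zspan_additive_sum:
  fixes x :: "nat \<Rightarrow> 'a::comm_monoid_add"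
  assumes additive: "\<And>x y. x \<in> P \<Longrightarrow> y \<in> P \<Longrightarrow> f (x + y) - f x - f y \<in> zspan G"
    and "f 0 \<in> zspan G" "0 \<in> P" "\<And>x y. x \<in> P \<Longrightarrow> y \<in> P \<Longrightarrow> x + y \<in> P"
    and "\<And>i. i < n \<Longrightarrow> x i \<in> P"
  shows "f (\<Sum>i<n. x i) - (\<Sum>i<n. f (x i)) \<in> zspan G"
proof -
  have "(\<Sum>i<n. x i) \<in> P \<and> f (\<Sum>i<n. x i) - (\<Sum>i<n. f (x i)) \<in> zspan G"
    using assms(5)
  proof (induction n)
    case (Suc n)
    have IH: "(\<Sum>i<n. x i) \<in> P \<and> f (\<Sum>i<n. x i) - (\<Sum>i<n. f (x i)) \<in> zspan G"
      by (rule Suc.IH) (simp add: Suc.prems)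
    have xn: "x n \<in> P"
      by (simp add: Suc.prems)
    have "(f ((\<Sum>i<n. x i) + x n) - f (\<Sum>i<n. x i) - f (x n))
        + (f (\<Sum>i<n. x i) - (\<Sum>i<n. f (x i))) \<in> zspan G"
      using additive IH xn by (blast intro: zspan_add)
    moreover have "(\<Sum>i<Suc n. x i) \<in> P"
      using IH xn assms(4) by simp
    ultimately show "(\<Sum>i<Suc n. x i) \<in> P \<and> f (\<Sum>i<Suc n. x i) - (\<Sum>i<Suc n. f (x i)) \<in> zspan G"
      by (simp add: algebra_simps)
  qed (use assms(2,3) in simp)
  then show ?thesis ..
qed

context module
begin

lemma tensor_rel_add_left:
  "a \<in> L \<Longrightarrow> a' \<in> L \<Longrightarrow> delta (a + a', m) - delta (a, m) - delta (a', m) \<in> zspan (tensor_rels scale L)"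
  unfolding tensor_rels_def fun_diff_def by (rule zspan_gen) blast

lemma tensor_rel_add_right:
  "a \<in> L \<Longrightarrow> delta (a, m + m') - delta (a, m) - delta (a, m') \<in> zspan (tensor_rels scale L)"
  unfolding tensor_rels_def fun_diff_def by (rule zspan_gen) blast

lemma tensor_rel_scale:
  "a \<in> L \<Longrightarrow> delta (t * a, m) - delta (a, scale t m) \<in> zspan (tensor_rels scale L)"
  unfolding tensor_rels_def fun_diff_def by (rule zspan_gen) blast

lemma tensor_zero_right: "a \<in> L \<Longrightarrow> delta (a, 0) \<in> zspan (tensor_rels scale L)"
  using zspan_uminus[OF tensor_rel_add_right[of a L 0 0]] by simp

lemma tensor_sum_right:
  "a \<in> L \<Longrightarrow> delta (a, \<Sum>i<(n::nat). y i) - (\<Sum>i<n. delta (a, y i)) \<in> zspan (tensor_rels scale L)"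
  by (rule zspan_additive_sum[where P=UNIV and f="\<lambda>y. delta (a, y)"])
     (simp_all add: tensor_rel_add_right tensor_zero_right)

lemma tensor_sum_left:
  assumes "is_ideal L" "\<And>i. i < (n::nat) \<Longrightarrow> x i \<in> L"
  shows "delta (\<Sum>i<n. x i, m) - (\<Sum>i<n. delta (x i, m)) \<in> zspan (tensor_rels scale L)"
proof (rule zspan_additive_sum[where P=L and f="\<lambda>x. delta (x, m)"])
  show "delta (0, m) \<in> zspan (tensor_rels scale L)"
    using zspan_uminus[OF tensor_rel_add_left[of 0 L 0 m]] ideal_zero[OF assms(1)] by simp
qed (use assms ideal_zero ideal_add tensor_rel_add_left in auto)

lemma scale_of_nat_eq_sum: "scale (of_nat n) y = (\<Sum>i<n. y)"
  by (induction n) (simp_all add: scale_left_distrib add.commute)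

lemma tensor_of_int_right:
  assumes a: "a \<in> L"
  shows "delta (a, scale (of_int c) y) - of_int c * delta (a, y) \<in> zspan (tensor_rels scale L)"
proof -
  have nat: "delta (a, scale (of_nat n) y) - of_nat n * delta (a, y) \<in> zspan (tensor_rels scale L)" for n
    using tensor_sum_right[OF a, where n=n and y="\<lambda>_. y"] by (simp add: scale_of_nat_eq_sum)
  show ?thesis
  proof (cases c rule: int_cases2)
    case (nonpos n)
    define s where "s = scale (of_nat n) y"
    have "delta (a, 0) - (delta (a, s + - s) - delta (a, s) - delta (a, - s))
        - (delta (a, s) - of_nat n * delta (a, y)) \<in> zspan (tensor_rels scale L)"
      unfolding s_def by (rule zspan_diff[OF zspan_diff[OF tensor_zero_right[OF a] tensor_rel_add_right[OF a]] nat])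
    then show ?thesis
      by (simp add: nonpos s_def scale_minus_left algebra_simps)
  qed (simp add: nat)
qed

end

section \<open>Adically complete modules\<close>

locale adic_complete_module = module scale
  for scale :: "'r::comm_ring_1 \<Rightarrow> 'm::ab_group_add \<Rightarrow> 'm" +
  fixes K :: "'r set"
  assumes complete_sep: "adic_complete_sep scale {0} K"
begin

lemma adic_separated: "(\<And>k. x \<in> submod scale (ideal_pow K k)) \<Longrightarrow> x = 0"
  using complete_sep unfolding adic_complete_sep_def adic_nbhd_zero by blast

lemma adic_complete:
  "(\<And>k. f (Suc k) - f k \<in> submod scale (ideal_pow K k)) \<Longrightarrow>
    \<exists>x. \<forall>k. x - f k \<in> submod scale (ideal_pow K k)"
  using complete_sep unfolding adic_complete_sep_def adic_nbhd_zero by blast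

text \<open>The limit is that of the partial sums of the \<open>J\<close>-adic parts of the increments of \<open>f\<close>.\<close>

lemma adic_complete_quotient:
  assumes L: "is_ideal L"
    and finer: "\<And>k. ideal_pow J k \<subseteq> ideal_pow K k"
    and coarser: "\<And>k. ideal_pow K (k + e) \<subseteq> ideal_sum (ideal_pow J k) L"
    and f: "\<And>k. f (Suc k) - f k \<in> adic_nbhd scale (submod scale L) J k"
  shows "\<exists>x. \<forall>k. x - f k \<in> adic_nbhd scale (submod scale L) J k"
proof -
  have "\<forall>k. \<exists>g z. f (Suc k) - f k = g + z \<and> g \<in> submod scale (ideal_pow J k) \<and> z \<in> submod scale L"
    using f unfolding adic_nbhd_def by blast
  then obtain g z where gz: "\<And>k. f (Suc k) - f k = g k + z k"
    and g: "\<And>k. g k \<in> submod scale (ideal_pow J k)" and z: "\<And>k. z k \<in> submod scale L"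
    by metis
  define F where "F k = f 0 + (\<Sum>j<k. g j)" for k
  have "F (Suc k) - F k \<in> submod scale (ideal_pow K k)" for k
    using g submod_mono[OF finer] by (auto simp: F_def)
  then obtain x where x: "\<And>k. x - F k \<in> submod scale (ideal_pow K k)"
    using adic_complete by blast
  have F_f: "F k - f k \<in> submod scale L" for k
  proof (induction k)
    case (Suc k)
    have "F (Suc k) - f (Suc k) = (F k - f k) - z k"
      using gz[of k] by (simp add: F_def algebra_simps)
    with Suc z show ?case by (simp add: submod_diff)
  qed (simp add: F_def submod_zero)
  have F_F: "F (k + i) - F k \<in> submod scale (ideal_pow J k)" for k i
  proof -
    have "g (k + j) \<in> submod scale (ideal_pow J k)" for j
      using g submod_mono[OF ideal_pow_antimono[of k "k + j" J]] by auto
    then show ?thesis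
      by (simp add: F_def sum_lessThan_add submod_sum)
  qed
  have "x - f k \<in> submod scale (ideal_sum (ideal_pow J k) L)" for k
  proof -
    have "x - F (k + e) \<in> submod scale (ideal_sum (ideal_pow J k) L)"
      using x submod_mono[OF coarser] by blast
    moreover have "F (k + e) - F k \<in> submod scale (ideal_sum (ideal_pow J k) L)"
      using F_F submod_mono[OF ideal_sum_subset_left[OF L]] by blast
    moreover have "F k - f k \<in> submod scale (ideal_sum (ideal_pow J k) L)"
      using F_f submod_mono[OF ideal_sum_subset_right[OF is_ideal_ideal_pow]] by blast
    ultimately have "(x - F (k + e)) + (F (k + e) - F k) + (F k - f k) \<in> submod scale (ideal_sum (ideal_pow J k) L)"
      by (intro submod_add)
    then show ?thesis
      by simp
  qed
  then show ?thesis
    by (auto simp: adic_nbhd_submod[OF L])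
qed

end

section \<open>Dual bases with adically continuous coordinates\<close>

locale adic_dual_basis = adic_complete_module scale K + ideal_dual_basis L r a \<phi>
  for scale :: "'r::comm_ring_1 \<Rightarrow> 'm::ab_group_add \<Rightarrow> 'm" and K L r a \<phi> +
  fixes c :: nat
  assumes flat: "\<And>n. n \<ge> 1 \<Longrightarrow> quot_flat scale (ideal_pow K n)"
    and coord_adic: "\<And>i m x. i < r \<Longrightarrow> x \<in> L \<Longrightarrow> x \<in> ideal_pow K (m + c) \<Longrightarrow> \<phi> i x \<in> ideal_pow K m"
begin

lemma quot_flat_ideal_pow: "quot_flat scale (ideal_pow K n)"
  using flat[of n] quot_flat_UNIV by (cases n) auto

lemma coord_combination_scale:
  assumes j: "j < r"
  shows "(\<Sum>t<l. scale (\<phi> j (\<Sum>i<r. \<beta> i t * a i)) (y t))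
    = (\<Sum>i<r. scale (\<phi> j (a i)) (\<Sum>t<l. scale (\<beta> i t) (y t)))"
proof -
  have "\<phi> j (\<Sum>i<r. \<beta> i t * a i) = (\<Sum>i<r. \<beta> i t * \<phi> j (a i))" for t
    by (rule coord_sum[OF j basis_mem])
  then have "(\<Sum>t<l. scale (\<phi> j (\<Sum>i<r. \<beta> i t * a i)) (y t))
      = (\<Sum>t<l. \<Sum>i<r. scale (\<beta> i t * \<phi> j (a i)) (y t))"
    by (simp only: scale_sum_left)
  also have "\<dots> = (\<Sum>i<r. \<Sum>t<l. scale (\<phi> j (a i)) (scale (\<beta> i t) (y t)))"
    by (subst sum.swap) (simp add: mult.commute)
  also have "\<dots> = (\<Sum>i<r. scale (\<phi> j (a i)) (\<Sum>t<l. scale (\<beta> i t) (y t)))"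
    by (simp add: scale_sum_right)
  finally show ?thesis .
qed

text \<open>Flatness of \<open>M/K^(m+c)M\<close> lifts the relation among the \<open>a i\<close> to relations in \<open>R\<close>, to which
  the coordinate functions can be applied.\<close>

lemma coordinates_adic:
  assumes v: "(\<Sum>i<r. scale (a i) (v i)) \<in> submod scale (ideal_pow K (m + c))" and j: "j < r"
  shows "(\<Sum>i<r. scale (\<phi> j (a i)) (v i)) \<in> submod scale (ideal_pow K m)"
proof -
  obtain l :: nat and \<beta> y where
    v_y: "\<forall>i<r. v i - (\<Sum>t<l. scale (\<beta> i t) (y t)) \<in> submod scale (ideal_pow K (m + c))" and
    a_\<beta>: "\<forall>t<l. (\<Sum>i<r. a i * \<beta> i t) \<in> ideal_pow K (m + c)"
    using quot_flat_ideal_pow v unfolding quot_flat_def by blast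
  have "(\<Sum>i<r. scale (\<phi> j (a i)) (v i - (\<Sum>t<l. scale (\<beta> i t) (y t)))) \<in> submod scale (ideal_pow K m)"
    using v_y submod_mono[OF ideal_pow_antimono[of m "m + c"]] by (intro submod_sum submod_scale) auto
  moreover have "(\<Sum>t<l. scale (\<phi> j (\<Sum>i<r. \<beta> i t * a i)) (y t)) \<in> submod scale (ideal_pow K m)"
  proof (intro submod_sum submod_mem)
    fix t assume "t \<in> {..<l}"
    moreover have "(\<Sum>i<r. \<beta> i t * a i) = (\<Sum>i<r. a i * \<beta> i t)"
      by (simp add: mult.commute)
    moreover have "(\<Sum>i<r. \<beta> i t * a i) \<in> L"
      using basis_mem L_ideal by (auto intro!: sum_mem_ideal ideal_mult_left)
    ultimately show "\<phi> j (\<Sum>i<r. \<beta> i t * a i) \<in> ideal_pow K m"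
      using a_\<beta> coord_adic[OF j] by auto
  qed
  moreover have "(\<Sum>t<l. scale (\<phi> j (\<Sum>i<r. \<beta> i t * a i)) (y t))
      = (\<Sum>i<r. scale (\<phi> j (a i)) (\<Sum>t<l. scale (\<beta> i t) (y t)))"
    by (rule coord_combination_scale[OF j])
  moreover have "(\<Sum>i<r. scale (\<phi> j (a i)) (v i)) =
      (\<Sum>i<r. scale (\<phi> j (a i)) (v i - (\<Sum>t<l. scale (\<beta> i t) (y t)))) +
      (\<Sum>i<r. scale (\<phi> j (a i)) (\<Sum>t<l. scale (\<beta> i t) (y t)))"
    by (simp add: scale_right_diff_distrib sum_subtractf)
  ultimately show ?thesis
    by (simp add: submod_add)
qed

lemma basis_relation_eq_zero:
  assumes "\<And>j. j < r \<Longrightarrow> \<mu> j = (\<Sum>i<r. scale (\<phi> j (a i)) (\<mu> i))"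
    and "(\<Sum>i<r. scale (a i) (\<mu> i)) = 0" and "j < r"
  shows "\<mu> j = 0"
proof (rule adic_separated)
  fix k
  have "(\<Sum>i<r. scale (a i) (\<mu> i)) \<in> submod scale (ideal_pow K (k + c))"
    using assms(2) by (simp add: submod_zero)
  from coordinates_adic[OF this assms(3)] assms(1,3)
  show "\<mu> j \<in> submod scale (ideal_pow K k)" by simp
qed

lemma submod_basis_expansion:
  assumes "y \<in> submod scale L"
  obtains u where "y = (\<Sum>i<r. scale (a i) (u i))"
proof -
  let ?S = "{y. \<exists>u. y = (\<Sum>i<r. scale (a i) (u i))}"
  have "subspace ?S"
    unfolding subspace_def
  proof (intro conjI ballI allI)
    show "0 \<in> ?S"
      by (auto intro: exI[of _ "\<lambda>_. 0"])
    show "x + y \<in> ?S" if "x \<in> ?S" "y \<in> ?S" for x y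
    proof -
      from that obtain u w where "x = (\<Sum>i<r. scale (a i) (u i))" "y = (\<Sum>i<r. scale (a i) (w i))"
        by blast
      then have "x + y = (\<Sum>i<r. scale (a i) (u i + w i))"
        by (simp add: scale_right_distrib sum.distrib)
      then show ?thesis by (simp only: mem_Collect_eq exI[of _ "\<lambda>i. u i + w i"])
    qed
    show "scale t x \<in> ?S" if "x \<in> ?S" for t x
    proof -
      from that obtain u where "x = (\<Sum>i<r. scale (a i) (u i))"
        by blast
      then have "scale t x = (\<Sum>i<r. scale (a i) (scale t (u i)))"
        by (simp add: scale_sum_right mult.commute)
      then show ?thesis by (simp only: mem_Collect_eq exI[of _ "\<lambda>i. scale t (u i)"])
    qed
  qed
  moreover have "scale b m \<in> ?S" if "b \<in> L" for b m
  proof -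
    have "scale b m = scale (\<Sum>i<r. a i * \<phi> i b) m"
      by (simp add: expansion[OF that])
    also have "\<dots> = (\<Sum>i<r. scale (a i) (scale (\<phi> i b) m))"
      by (simp add: scale_sum_left)
    finally have "scale b m = (\<Sum>i<r. scale (a i) (scale (\<phi> i b) m))" .
    then show ?thesis by (simp only: mem_Collect_eq exI[of _ "\<lambda>i. scale (\<phi> i b) m"])
  qed
  ultimately have "submod scale L \<subseteq> ?S" by (rule submod_least)
  with assms that show ?thesis by blast
qed

lemma basis_coordinates_expansion:
  "(\<Sum>j<r. scale (a j) (\<Sum>i<r. scale (\<phi> j (a i)) (u i))) = (\<Sum>i<r. scale (a i) (u i))"
proof -
  have "(\<Sum>j<r. scale (a j) (\<Sum>i<r. scale (\<phi> j (a i)) (u i)))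
      = (\<Sum>j<r. \<Sum>i<r. scale (a j * \<phi> j (a i)) (u i))"
    by (simp add: scale_sum_right)
  also have "\<dots> = (\<Sum>i<r. scale (\<Sum>j<r. a j * \<phi> j (a i)) (u i))"
    by (subst sum.swap) (simp add: scale_sum_left)
  also have "\<dots> = (\<Sum>i<r. scale (a i) (u i))"
    using expansion basis_mem by simp
  finally show ?thesis .
qed

lemma adic_nbhd_basis_approx:
  assumes "x \<in> adic_nbhd scale (submod scale L) K k"
  obtains u where "x - (\<Sum>i<r. scale (a i) (u i)) \<in> submod scale (ideal_pow K k)"
proof -
  from assms obtain y z where "x = y + z" "y \<in> submod scale (ideal_pow K k)" "z \<in> submod scale L"
    unfolding adic_nbhd_def by blast
  moreover obtain u where "z = (\<Sum>i<r. scale (a i) (u i))"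
    using \<open>z \<in> submod scale L\<close> by (rule submod_basis_expansion)
  ultimately have "x - (\<Sum>i<r. scale (a i) (u i)) \<in> submod scale (ideal_pow K k)"
    by simp
  then show ?thesis by (rule that)
qed

text \<open>If \<open>x\<close> is approximated by \<open>\<Sum> a i * U k i\<close>, the
  normalised coefficients \<open>\<Sum> \<phi> j (a i) * U (k + c) i\<close> form Cauchy sequences, whose limits
  express \<open>x\<close> in \<open>LM\<close>.\<close>

lemma submod_adic_closed:
  assumes x: "\<And>k. x \<in> adic_nbhd scale (submod scale L) K k"
  shows "x \<in> submod scale L"
proof -
  have "\<forall>k. \<exists>u. x - (\<Sum>i<r. scale (a i) (u i)) \<in> submod scale (ideal_pow K k)"
    using adic_nbhd_basis_approx x by blast
  then obtain U where U: "\<And>k. x - (\<Sum>i<r. scale (a i) (U k i)) \<in> submod scale (ideal_pow K k)"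
    by metis
  have U_shift: "x - (\<Sum>i<r. scale (a i) (U (k + c) i)) \<in> submod scale (ideal_pow K k)" for k
    using U[of "k + c"] submod_mono[OF ideal_pow_antimono[of k "k + c" K]] by auto
  define w where "w k j = (\<Sum>i<r. scale (\<phi> j (a i)) (U (k + c) i))" for k j
  have w_cauchy: "w (Suc k) j - w k j \<in> submod scale (ideal_pow K k)" if "j < r" for k j
  proof -
    have "(\<Sum>i<r. scale (a i) (U (Suc k + c) i - U (k + c) i))
        = (x - (\<Sum>i<r. scale (a i) (U (k + c) i))) - (x - (\<Sum>i<r. scale (a i) (U (Suc k + c) i)))"
      by (simp add: scale_right_diff_distrib sum_subtractf)
    also have "\<dots> \<in> submod scale (ideal_pow K (k + c))"
      using U[of "Suc k + c"] submod_mono[OF ideal_pow_antimono[of "k + c" "Suc k + c" K]]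
      by (intro submod_diff[OF U]) auto
    finally have "(\<Sum>i<r. scale (a i) (U (Suc k + c) i - U (k + c) i)) \<in> submod scale (ideal_pow K (k + c))" .
    from coordinates_adic[OF this that] show ?thesis
      by (simp add: w_def scale_right_diff_distrib sum_subtractf)
  qed
  have "\<forall>j. \<exists>z. j < r \<longrightarrow> (\<forall>k. z - w k j \<in> submod scale (ideal_pow K k))"
    using adic_complete[of "\<lambda>k. w k _"] w_cauchy by blast
  then obtain z where z: "\<And>j k. j < r \<Longrightarrow> z j - w k j \<in> submod scale (ideal_pow K k)"
    by metis
  have "x - (\<Sum>j<r. scale (a j) (z j)) = 0"
  proof (rule adic_separated)
    fix k
    have "x - (\<Sum>j<r. scale (a j) (z j))
        = (x - (\<Sum>i<r. scale (a i) (U (k + c) i))) - (\<Sum>j<r. scale (a j) (z j - w k j))"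
      using basis_coordinates_expansion[of "U (k + c)"]
      by (simp add: w_def scale_right_diff_distrib sum_subtractf)
    also have "\<dots> \<in> submod scale (ideal_pow K k)"
      using z by (intro submod_diff[OF U_shift] submod_sum submod_scale) auto
    finally show "x - (\<Sum>j<r. scale (a j) (z j)) \<in> submod scale (ideal_pow K k)" .
  qed
  then show ?thesis
    using basis_mem by (auto intro!: submod_sum submod_mem)
qed

lemma tensor_basis_expansion:
  assumes "x \<in> L"
  shows "delta (x, m) - (\<Sum>i<r. delta (a i, scale (\<phi> i x) m)) \<in> zspan (tensor_rels scale L)"
proof -
  have "delta (\<Sum>i<r. \<phi> i x * a i, m) - (\<Sum>i<r. delta (\<phi> i x * a i, m)) \<in> zspan (tensor_rels scale L)"
    using basis_mem L_ideal by (intro tensor_sum_left) (auto intro: ideal_mult_left)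
  moreover have "(\<Sum>i<r. delta (\<phi> i x * a i, m) - delta (a i, scale (\<phi> i x) m)) \<in> zspan (tensor_rels scale L)"
    using basis_mem by (intro zspan_sum tensor_rel_scale) auto
  ultimately have "(delta (\<Sum>i<r. \<phi> i x * a i, m) - (\<Sum>i<r. delta (\<phi> i x * a i, m)))
      + (\<Sum>i<r. delta (\<phi> i x * a i, m) - delta (a i, scale (\<phi> i x) m)) \<in> zspan (tensor_rels scale L)"
    by (rule zspan_add)
  then have "delta (\<Sum>i<r. \<phi> i x * a i, m) - (\<Sum>i<r. delta (a i, scale (\<phi> i x) m))
      \<in> zspan (tensor_rels scale L)"
    by (simp add: sum_subtractf)
  then show ?thesis
    using expansion[OF assms] by (simp add: mult.commute)
qed

lemma tensor_int_basis_expansion: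
  assumes "x \<in> L"
  shows "of_int k * delta (x, m) - (\<Sum>i<r. delta (a i, scale (of_int k * \<phi> i x) m))
    \<in> zspan (tensor_rels scale L)"
proof -
  have "of_int k * (delta (x, m) - (\<Sum>i<r. delta (a i, scale (\<phi> i x) m))) \<in> zspan (tensor_rels scale L)"
    by (rule zspan_of_int_mult[OF tensor_basis_expansion[OF assms]])
  moreover have "(\<Sum>i<r. - (delta (a i, scale (of_int k) (scale (\<phi> i x) m))
      - of_int k * delta (a i, scale (\<phi> i x) m))) \<in> zspan (tensor_rels scale L)"
    using basis_mem by (intro zspan_sum zspan_uminus tensor_of_int_right) auto
  ultimately have "of_int k * (delta (x, m) - (\<Sum>i<r. delta (a i, scale (\<phi> i x) m)))
      + (\<Sum>i<r. - (delta (a i, scale (of_int k) (scale (\<phi> i x) m))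
      - of_int k * delta (a i, scale (\<phi> i x) m))) \<in> zspan (tensor_rels scale L)"
    by (rule zspan_add)
  then show ?thesis
    by (simp add: sum_subtractf sum_negf sum_distrib_left right_diff_distrib)
qed

lemma coords_relation_eq_zero:
  fixes n :: nat
  assumes x: "\<forall>t<n. x t \<in> L" and rel: "(\<Sum>t<n. scale (f t * x t) (m t)) = 0" and j: "j < r"
  shows "(\<Sum>t<n. scale (f t * \<phi> j (x t)) (m t)) = 0"
proof -
  define \<nu> where "\<nu> j = (\<Sum>t<n. scale (f t * \<phi> j (x t)) (m t))" for j
  have \<nu>_eq: "(\<Sum>i<r. scale (b i) (\<nu> i)) = (\<Sum>t<n. scale (f t * (\<Sum>i<r. \<phi> i (x t) * b i)) (m t))"
    for b
  proof -
    have "(\<Sum>i<r. scale (b i) (\<nu> i)) = (\<Sum>i<r. \<Sum>t<n. scale (b i * (f t * \<phi> i (x t))) (m t))"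
      by (simp add: \<nu>_def scale_sum_right)
    also have "\<dots> = (\<Sum>t<n. scale (f t * (\<Sum>i<r. \<phi> i (x t) * b i)) (m t))"
      by (subst sum.swap) (simp add: scale_sum_left sum_distrib_left algebra_simps)
    finally show ?thesis .
  qed
  have "\<nu> j = 0"
  proof (rule basis_relation_eq_zero[OF _ _ j])
    show "\<nu> j = (\<Sum>i<r. scale (\<phi> j (a i)) (\<nu> i))" if "j < r" for j
      unfolding \<nu>_eq using x that by (simp add: \<nu>_def coord_of_coords)
    show "(\<Sum>i<r. scale (a i) (\<nu> i)) = 0"
      unfolding \<nu>_eq using x rel by (simp add: expansion mult.commute)
  qed
  then show ?thesis by (simp add: \<nu>_def)
qed

lemma tensor_sum_basis_expansion:
  fixes n :: nat
  assumes x: "\<forall>t<n. x t \<in> L"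
  shows "(\<Sum>t<n. of_int (k t) * delta (x t, m t))
      - (\<Sum>i<r. delta (a i, \<Sum>t<n. scale (of_int (k t) * \<phi> i (x t)) (m t)))
    \<in> zspan (tensor_rels scale L)"
proof -
  let ?y = "\<lambda>i t. scale (of_int (k t) * \<phi> i (x t)) (m t)"
  have "(\<Sum>t<n. of_int (k t) * delta (x t, m t) - (\<Sum>i<r. delta (a i, ?y i t)))
      \<in> zspan (tensor_rels scale L)"
    using x by (intro zspan_sum tensor_int_basis_expansion) auto
  moreover have "delta (a i, \<Sum>t<n. ?y i t) - (\<Sum>t<n. delta (a i, ?y i t)) \<in> zspan (tensor_rels scale L)"
    if "i < r" for i
    using tensor_sum_right[OF basis_mem[OF that], where n=n and y="?y i"] .
  then have "(\<Sum>i<r. - (delta (a i, \<Sum>t<n. ?y i t) - (\<Sum>t<n. delta (a i, ?y i t))))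
      \<in> zspan (tensor_rels scale L)"
    by (intro zspan_sum zspan_uminus) auto
  ultimately have "(\<Sum>t<n. of_int (k t) * delta (x t, m t) - (\<Sum>i<r. delta (a i, ?y i t)))
      + (\<Sum>i<r. - (delta (a i, \<Sum>t<n. ?y i t) - (\<Sum>t<n. delta (a i, ?y i t))))
      \<in> zspan (tensor_rels scale L)"
    by (rule zspan_add)
  then show ?thesis
    by (simp add: sum_subtractf sum_negf sum.swap[of _ "{..<r}"])
qed

lemma injective_tensor_mult: "tensor_mult_injective scale L"
  unfolding tensor_mult_injective_def
proof (intro allI impI)
  fix n :: nat and k :: "nat \<Rightarrow> int" and x :: "nat \<Rightarrow> 'r" and m :: "nat \<Rightarrow> 'm"
  assume x: "\<forall>i<n. x i \<in> L" and rel: "(\<Sum>i<n. scale (of_int (k i) * x i) (m i)) = 0"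
  have "(\<Sum>i<r. delta (a i, \<Sum>t<n. scale (of_int (k t) * \<phi> i (x t)) (m t))) \<in> zspan (tensor_rels scale L)"
    using coords_relation_eq_zero[OF x rel] basis_mem by (auto intro!: zspan_sum tensor_zero_right)
  from zspan_add[OF tensor_sum_basis_expansion[OF x, where k=k and m=m] this]
  have "(\<Sum>t<n. of_int (k t) * delta (x t, m t)) \<in> zspan (tensor_rels scale L)"
    by simp
  moreover have "(\<Sum>t<n. of_int (k t) * delta (x t, m t)) = (\<lambda>q. \<Sum>i<n. k i * delta (x i, m i) q)"
    by (simp add: fun_eq_iff sum_fun_apply of_int_fun_apply)
  ultimately show "(\<lambda>q. \<Sum>i<n. k i * delta (x i, m i) q) \<in> zspan (tensor_rels scale L)"
    by simp
qed

end

section \<open>Modules over \<open>\<pi>R + I\<close>\<close>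

locale pi_adic_flat_module = module scale + pi_torsion_bounded I \<pi> N
  for scale :: "'r::comm_ring_1 \<Rightarrow> 'm::ab_group_add \<Rightarrow> 'm" and I :: "'r set" and \<pi> :: 'r and N :: nat +
  assumes I_invertible: "invertible_ideal I"
    and K_complete_sep: "adic_complete_sep scale {0} (ideal_sum (principal_ideal \<pi>) I)"
    and K_flat: "\<And>n. n \<ge> 1 \<Longrightarrow> quot_flat scale (ideal_pow (ideal_sum (principal_ideal \<pi>) I) n)"
begin

sublocale adic_complete_module scale K
  by unfold_locales (rule K_complete_sep)

lemma adic_dual_basis_ideal_pow:
  obtains r a \<phi> where "adic_dual_basis scale K (ideal_pow I n) r a \<phi> (n * (N + 1))"
proof -
  obtain r a \<phi> where "ideal_dual_basis (ideal_pow I n) r a \<phi>"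
    using is_ideal_ideal_pow invertible_ideal_pow[OF I_invertible] by (rule invertible_ideal_dual_basis)
  then interpret ideal_dual_basis "ideal_pow I n" r a \<phi> .
  have "adic_dual_basis scale K (ideal_pow I n) r a \<phi> (n * (N + 1))"
  proof unfold_locales
    show "quot_flat scale (ideal_pow K k)" if "k \<ge> 1" for k
      using K_flat[OF that] .
    show "\<phi> i x \<in> ideal_pow K m"
      if "i < r" "x \<in> ideal_pow I n" "x \<in> ideal_pow K (m + n * (N + 1))" for i m x
      using coord_ideal_prod[OF that(1) is_ideal_ideal_pow artin_rees[OF I_invertible that(2,3)]] .
  qed
  then show ?thesis by (rule that)
qed

lemma tensor_mult_injective_ideal_pow: "tensor_mult_injective scale (ideal_pow I n)"
proof -
  obtain r a \<phi> where "adic_dual_basis scale K (ideal_pow I n) r a \<phi> (n * (N + 1))"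
    by (rule adic_dual_basis_ideal_pow)
  then interpret adic_dual_basis scale K "ideal_pow I n" r a \<phi> "n * (N + 1)" .
  show ?thesis by (rule injective_tensor_mult)
qed

lemma quotient_adic_complete_sep:
  assumes "n \<ge> 1"
  shows "adic_complete_sep scale (submod scale (ideal_pow I n)) (principal_ideal \<pi>)"
proof -
  obtain r a \<phi> where "adic_dual_basis scale K (ideal_pow I n) r a \<phi> (n * (N + 1))"
    by (rule adic_dual_basis_ideal_pow)
  then interpret adic_dual_basis scale K "ideal_pow I n" r a \<phi> "n * (N + 1)" .
  have finer: "ideal_pow (principal_ideal \<pi>) k \<subseteq> ideal_pow K k" for k
    by (rule ideal_pow_mono[OF principal_ideal_subset_K])
  have coarser: "ideal_pow K (k + (n - 1)) \<subseteq> ideal_sum (ideal_pow (principal_ideal \<pi>) k) (ideal_pow I n)" for k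
    by (rule ideal_pow_ideal_sum_subset[OF is_ideal_principal_ideal I_ideal]) (use assms in simp)
  show ?thesis
    unfolding adic_complete_sep_def
  proof (intro conjI allI impI)
    fix x assume "\<forall>k. x \<in> adic_nbhd scale (submod scale (ideal_pow I n)) (principal_ideal \<pi>) k"
    then show "x \<in> submod scale (ideal_pow I n)"
      using submod_mono[OF ideal_sum_mono[OF finer order_refl]]
      by (intro submod_adic_closed) (auto simp: adic_nbhd_submod[OF is_ideal_ideal_pow])
  next
    fix f assume "\<forall>k. f (Suc k) - f k \<in> adic_nbhd scale (submod scale (ideal_pow I n)) (principal_ideal \<pi>) k"
    then show "\<exists>x. \<forall>k. x - f k \<in> adic_nbhd scale (submod scale (ideal_pow I n)) (principal_ideal \<pi>) k"
      using adic_complete_quotient[OF is_ideal_ideal_pow finer coarser] by blast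
  qed
qed

lemma pi_torsion_quotient:
  assumes x: "scale (\<pi> ^ k) x \<in> submod scale I"
  shows "scale (\<pi> ^ N) x \<in> submod scale I"
proof -
  have "scale (\<pi> ^ N) x \<in> submod scale (ideal_sum (principal_ideal (\<pi> ^ m)) I)" for m
  proof -
    have "quot_flat scale (ideal_pow K (m + k + 1))"
      by (rule K_flat) simp
    then obtain l :: nat and \<beta> Y
      where xY: "x - (\<Sum>j<l. scale (\<beta> j) (Y j)) \<in> submod scale (ideal_pow K (m + k + 1))"
        and \<beta>: "\<forall>j<l. \<pi> ^ k * \<beta> j \<in> ideal_sum (ideal_pow K (m + k + 1)) I"
      using I_ideal x by (rule quot_flat_colon)
    have "ideal_pow K (m + k + 1) \<subseteq> ideal_sum (ideal_pow (principal_ideal \<pi>) m) (ideal_pow I 1)"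
      by (rule ideal_pow_ideal_sum_subset[OF is_ideal_principal_ideal I_ideal]) simp
    then have "ideal_pow K (m + k + 1) \<subseteq> ideal_sum (principal_ideal (\<pi> ^ m)) I"
      by (simp only: ideal_pow_principal_ideal ideal_pow_1[OF I_ideal])
    with xY have "x - (\<Sum>j<l. scale (\<beta> j) (Y j)) \<in> submod scale (ideal_sum (principal_ideal (\<pi> ^ m)) I)"
      using submod_mono by blast
    then have "scale (\<pi> ^ N) (x - (\<Sum>j<l. scale (\<beta> j) (Y j)))
        \<in> submod scale (ideal_sum (principal_ideal (\<pi> ^ m)) I)"
      by (rule submod_scale)
    moreover have "(\<Sum>j<l. scale (\<pi> ^ N * \<beta> j) (Y j)) \<in> submod scale (ideal_sum (principal_ideal (\<pi> ^ m)) I)"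
      using \<beta> torsion_bound_mod_pi_power by (intro submod_sum submod_mem) auto
    ultimately have "scale (\<pi> ^ N) (x - (\<Sum>j<l. scale (\<beta> j) (Y j))) + (\<Sum>j<l. scale (\<pi> ^ N * \<beta> j) (Y j))
        \<in> submod scale (ideal_sum (principal_ideal (\<pi> ^ m)) I)"
      by (rule submod_add)
    then show ?thesis
      by (simp add: scale_right_diff_distrib scale_sum_right)
  qed
  moreover have "adic_complete_sep scale (submod scale I) (principal_ideal \<pi>)"
    using quotient_adic_complete_sep[of 1] unfolding ideal_pow_1[OF I_ideal] by simp
  ultimately show ?thesis
    unfolding adic_complete_sep_def
    by (simp add: adic_nbhd_submod[OF I_ideal] ideal_pow_principal_ideal)
qed

end

theorem proposition4p4:
  fixes N :: nat and I :: "'r::comm_ring_1 set" and \<pi> :: 'r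
    and scale :: "'r \<Rightarrow> 'm::ab_group_add \<Rightarrow> 'm"
  assumes "module scale"
    and "is_ideal I" and "invertible_ideal I"
    and "\<forall>r k. \<pi> ^ k * r \<in> I \<longrightarrow> \<pi> ^ N * r \<in> I"
    and "adic_complete_sep scale {0} (ideal_sum (principal_ideal \<pi>) I)"
    and "\<forall>n\<ge>1. quot_flat scale (ideal_pow (ideal_sum (principal_ideal \<pi>) I) n)"
  shows "(\<forall>x k. scale (\<pi> ^ k) x \<in> submod scale I \<longrightarrow> scale (\<pi> ^ N) x \<in> submod scale I)
    \<and> (\<forall>n\<ge>1. adic_complete_sep scale (submod scale (ideal_pow I n)) (principal_ideal \<pi>))
    \<and> (\<forall>n\<ge>1. tensor_mult_injective scale (ideal_pow I n))"
proof -
  interpret pi_adic_flat_module scale I \<pi> N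
    using assms
    by (intro pi_adic_flat_module.intro pi_torsion_bounded.intro pi_adic_flat_module_axioms.intro) auto
  show ?thesis
    using pi_torsion_quotient quotient_adic_complete_sep tensor_mult_injective_ideal_pow by blast
qed

end
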